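(* There exist $\delta>0$ and a modulus of continuity $\eta$ such that, for every nearly spherical set $\mathcal A$ of class $C^{1,1}$ with $\mathcal{L}(\mathcal A)=1$, $\operatorname{bar}(\mathcal A)=\mathbf 0$ and $\|\varphi_{\mathcal A}\|_{C^{1,1}(\mathbb{S}^{N-1})}<\delta$, writing $\psi_{\mathcal A}=\sum_{k\ge0}c_kS_k$ with $c_k=(\psi_{\mathcal A},S_k)_{L^2(\mathbb{S}^{N-1})}$, one has $c_0=0$ and $\sum_{k\ge N+1}c_k^2=\|\psi_{\mathcal A}\|^2_{L^2(\mathbb{S}^{N-1})}\big(1+\eta(\|\varphi_{\mathcal A}\|_{L^\infty(\mathbb{S}^{N-1})})\big)$.
   Context: $B=B_{r_0}(\mathbf 0)$, $\mathcal{L}(B)=1$. $\mathcal A$ nearly spherical parametrized by $\varphi_{\mathcal A}$: $\varphi_{\mathcal A}\in C^{1,1}(\mathbb{S}^{N-1})$, $\|\varphi_{\mathcal A}\|_{L^\infty}\le r_0/2$, $\partial\mathcal A=\{(r_0+\varphi_{\mathcal A}(\theta))\theta\}$; $\operatorname{bar}$ is the barycenter. $\psi_{\mathcal A}(\theta)=\frac{(r_0+\varphi_{\mathcal A}(\theta))^N-r_0^N}{Nr_0^{N-1}}$. $(S_k)$ is an orthonormal basis of $L^2(\mathbb{S}^{N-1})$ of eigenfunctions of $-\Delta_{\mathbb{S}^{N-1}}$ with eigenvalues $\sigma_0=0<\sigma_1=\dots=\sigma_N=N-1<\sigma_{N+1}\le\dots$, $S_0$ constant and $S_1,\dots,S_N$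 the normalized coordinate functions. *)

theory Defs
  imports "HOL-Analysis.Analysis"
begin

abbreviation usphere :: "(real^'n) set" where
  "usphere \<equiv> sphere 0 1"

text \<open>Surface (Hausdorff) measure on the unit sphere, defined as the cone measure:
  sigma(E) = N * Lebesgue measure of {t x : 0 < t < 1, x in E}.\<close>
definition sphere_measure :: "(real^'n) measure" where
  "sphere_measure = scale_measure (ennreal (real CARD('n)))
     (distr (restrict_space lborel (ball 0 1 - {0})) (restrict_space lborel usphere)
        (\<lambda>x. x /\<^sub>R norm x))"

definition L2_sphere :: "((real^'n) \<Rightarrow> real) \<Rightarrow> bool" where
  "L2_sphere f \<longleftrightarrow> f \<in> borel_measurable sphere_measure \<and>
     integrable sphere_measure (\<lambda>x. (f x)\<^sup>2)"

definition L2_inner :: "((real^'n) \<Rightarrow> real) \<Rightarrow> ((real^'n) \<Rightarrow> real) \<Rightarrow> real" where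
  "L2_inner f g = (\<integral>x. f x * g x \<partial>sphere_measure)"

definition L2_norm_sq :: "((real^'n) \<Rightarrow> real) \<Rightarrow> real" where
  "L2_norm_sq f = (\<integral>x. (f x)\<^sup>2 \<partial>sphere_measure)"

definition hext :: "((real^'n) \<Rightarrow> real) \<Rightarrow> (real^'n) \<Rightarrow> real" where
  "hext f x = f (x /\<^sub>R norm x)"

text \<open>Tangential gradient = Euclidean gradient of the 0-homogeneous extension.\<close>
definition sph_grad :: "((real^'n) \<Rightarrow> real) \<Rightarrow> (real^'n) \<Rightarrow> real^'n" where
  "sph_grad f x = (\<chi> i. frechet_derivative (hext f) (at x) (axis i 1))"

text \<open>Laplace-Beltrami operator via the 0-homogeneous extension: at |x| = 1 the
  Euclidean Laplacian of the 0-homogeneous extension equals the spherical Laplacian.\<close>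
definition partial_deriv :: "((real^'n) \<Rightarrow> real) \<Rightarrow> 'n \<Rightarrow> (real^'n) \<Rightarrow> real" where
  "partial_deriv u i x = deriv (\<lambda>t. u (x + t *\<^sub>R axis i 1)) 0"

definition laplacian :: "((real^'n) \<Rightarrow> real) \<Rightarrow> (real^'n) \<Rightarrow> real" where
  "laplacian u x = (\<Sum>i\<in>UNIV. partial_deriv (\<lambda>y. partial_deriv u i y) i x)"

definition sph_laplacian :: "((real^'n) \<Rightarrow> real) \<Rightarrow> (real^'n) \<Rightarrow> real" where
  "sph_laplacian f x = laplacian (hext f) x"

definition C11_sphere :: "((real^'n) \<Rightarrow> real) \<Rightarrow> bool" where
  "C11_sphere f \<longleftrightarrow> (\<forall>x\<in>usphere. hext f differentiable (at x)) \<and>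
     (\<exists>L. \<forall>x\<in>usphere. \<forall>y\<in>usphere. norm (sph_grad f x - sph_grad f y) \<le> L * dist x y)"

definition Linf_sphere :: "((real^'n) \<Rightarrow> real) \<Rightarrow> real" where
  "Linf_sphere f = (SUP x\<in>usphere. \<bar>f x\<bar>)"

definition C11_norm :: "((real^'n) \<Rightarrow> real) \<Rightarrow> real" where
  "C11_norm f = Linf_sphere f + (SUP x\<in>usphere. norm (sph_grad f x))
     + (SUP p\<in>{(x,y). x \<in> usphere \<and> y \<in> usphere \<and> x \<noteq> y}.
          norm (sph_grad f (fst p) - sph_grad f (snd p)) / dist (fst p) (snd p))"

definition ns_set :: "real \<Rightarrow> ((real^'n) \<Rightarrow> real) \<Rightarrow> (real^'n) set" where
  "ns_set r0 \<phi> = {t *\<^sub>R \<theta> | t \<theta>. \<theta> \<in> usphere \<and> 0 \<le> t \<and> t < r0 + \<phi> \<theta>}"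

definition barycenter :: "(real^'n) set \<Rightarrow> real^'n" where
  "barycenter A = (1 / measure lebesgue A) *\<^sub>R (set_lebesgue_integral lebesgue A (\<lambda>x. x))"

definition psi_fun :: "real \<Rightarrow> ((real^'n) \<Rightarrow> real) \<Rightarrow> (real^'n) \<Rightarrow> real" where
  "psi_fun r0 \<phi> \<theta> = ((r0 + \<phi> \<theta>) ^ CARD('n) - r0 ^ CARD('n)) / (real CARD('n) * r0 ^ (CARD('n) - 1))"

definition modulus :: "(real \<Rightarrow> real) \<Rightarrow> bool" where
  "modulus \<eta> \<longleftrightarrow> \<eta> 0 = 0 \<and> (\<forall>t\<ge>0. \<eta> t \<ge> 0) \<and> mono_on {0..} \<eta> \<and> (\<eta> \<longlongrightarrow> 0) (at_right 0)"

end

theory Submission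
  imports Defs
begin

text \<open>In polar coordinates the nearly spherical set with radius function \<open>\<rho> = r\<^sub>0 + \<phi>\<close> has volume
  \<open>\<integral> \<rho>\<^sup>N / N\<close> and first moments \<open>\<integral> \<rho>\<^sup>N\<^sup>+\<^sup>1 \<theta>\<^sub>i / (N + 1)\<close> over the sphere. The volume
  constraint therefore says that \<open>\<psi>\<close> has mean zero, i.e. \<open>c\<^sub>0 = 0\<close>. The barycenter constraint
  says that the analogue of \<open>\<psi>\<close> with exponent \<open>N + 1\<close> is orthogonal to the coordinate functions;
  as both functions equal \<open>\<phi> + O(\<phi>\<^sup>2)\<close>, the coefficients \<open>c\<^sub>1, \<dots>, c\<^sub>N\<close> are
  \<open>O(\<parallel>\<phi>\<parallel>\<^sup>2\<^sub>L\<^sub>2) = O(\<parallel>\<phi>\<parallel>\<^sub>\<infinity> \<parallel>\<psi>\<parallel>\<^sub>L\<^sub>2)\<close>, since \<open>|\<phi>| \<le> N |\<psi>|\<close>. Parseval then gives the claim with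
  \<open>\<eta>(t) = \<kappa> t\<^sup>2\<close>.\<close>

section \<open>Polar coordinates\<close>

lemma normalize_in_sphere: "(x::real^'n) \<noteq> 0 \<Longrightarrow> x /\<^sub>R norm x \<in> usphere"
  by (simp add: norm_sgn sgn_div_norm[symmetric])

lemma normalize_measurable_restrict:
  "(\<lambda>x::real^'n. x /\<^sub>R norm x) \<in> restrict_space lborel (ball 0 R - {0}) \<rightarrow>\<^sub>M restrict_space lborel usphere"
proof (rule measurable_restrict_space2)
  show "(\<lambda>x::real^'n. x /\<^sub>R norm x) \<in> restrict_space lborel (ball 0 R - {0}) \<rightarrow>\<^sub>M lborel"
    by (rule measurable_restrict_space1) (simp add: measurable_lborel1)
  show "(\<lambda>x::real^'n. x /\<^sub>R norm x) \<in> space (restrict_space lborel (ball 0 R - {0})) \<rightarrow> usphere"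
    using normalize_in_sphere by (auto simp: space_restrict_space)
qed

lemma sets_sphere_measure: "sets (sphere_measure::(real^'n) measure) = sets (restrict_space lborel usphere)"
  unfolding sphere_measure_def by simp

lemma space_sphere_measure: "space (sphere_measure::(real^'n) measure) = usphere"
  using sets_eq_imp_space_eq[OF sets_sphere_measure] by (simp add: space_restrict_space)

definition cone_sector :: "real \<Rightarrow> (real^'n) set \<Rightarrow> (real^'n) set" where
  "cone_sector s B = {x. x \<noteq> 0 \<and> norm x < s \<and> x /\<^sub>R norm x \<in> B}"

lemma cone_sector_sets:
  assumes "B \<in> sets (restrict_space lborel (usphere::(real^'n) set))"
  shows "cone_sector s B \<in> sets lborel"
proof -
  obtain B' where B': "B' \<in> sets lborel" "B = usphere \<inter> B'"
    using assms by (auto simp: sets_restrict_space)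
  have "cone_sector s B = (-{0}) \<inter> ((\<lambda>x. x /\<^sub>R norm x) -` B' \<inter> space lborel) \<inter> ball 0 s"
    using B'(2) normalize_in_sphere by (auto simp: cone_sector_def)
  moreover have "(\<lambda>x::real^'n. x /\<^sub>R norm x) -` B' \<inter> space lborel \<in> sets lborel"
    by (rule measurable_sets[OF _ B'(1)]) (simp add: measurable_lborel1)
  ultimately show ?thesis by auto
qed

lemma cone_sector_scale:
  assumes "s > 0"
  shows "cone_sector s B = (\<lambda>x. s *\<^sub>R x + 0) ` cone_sector 1 (B::(real^'n) set)"
proof (intro set_eqI iffI)
  fix x assume x: "x \<in> cone_sector s B"
  show "x \<in> (\<lambda>x. s *\<^sub>R x + 0) ` cone_sector 1 B"
  proof (rule image_eqI[where x="(1/s) *\<^sub>R x"])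
    show "x = s *\<^sub>R (1 / s) *\<^sub>R x + 0" using assms by simp
    show "(1 / s) *\<^sub>R x \<in> cone_sector 1 B" using x assms
      by (auto simp: cone_sector_def divide_simps)
  qed
next
  fix x assume "x \<in> (\<lambda>x. s *\<^sub>R x + 0) ` cone_sector 1 B"
  then obtain y where y: "y \<in> cone_sector 1 B" "x = s *\<^sub>R y" by auto
  moreover have "(s *\<^sub>R y) /\<^sub>R norm (s *\<^sub>R y) = y /\<^sub>R norm y" using assms by simp
  ultimately show "x \<in> cone_sector s B" using assms
    by (auto simp: cone_sector_def simp del: scaleR_scaleR)
qed

lemma emeasure_cone_sector:
  assumes B: "B \<in> sets (restrict_space lborel (usphere::(real^'n) set))" and s: "s \<ge> 0"
  shows "emeasure lborel (cone_sector s B) = ennreal (s ^ CARD('n)) * emeasure lborel (cone_sector 1 B)"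
proof (cases "s = 0")
  case True
  then show ?thesis by (simp add: cone_sector_def)
next
  case False
  then have s0: "s > 0" using s by simp
  have "emeasure lborel (cone_sector s B) = emeasure lebesgue (cone_sector s B)"
    using cone_sector_sets[OF B] by simp
  also have "\<dots> = ennreal (s ^ CARD('n)) * emeasure lebesgue (cone_sector 1 B)"
    unfolding cone_sector_scale[OF s0] using s0 by (subst emeasure_lebesgue_affine) simp
  also have "\<dots> = ennreal (s ^ CARD('n)) * emeasure lborel (cone_sector 1 B)"
    using cone_sector_sets[OF B] by simp
  finally show ?thesis .
qed

lemma emeasure_sphere_measure:
  assumes B: "B \<in> sets (sphere_measure::(real^'n) measure)"
  shows "emeasure sphere_measure B = ennreal (real CARD('n)) * emeasure lborel (cone_sector 1 B)"
proof -
  have Bs: "B \<in> sets (restrict_space lborel usphere)" using B sets_sphere_measure by blast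
  have pre: "(\<lambda>x. x /\<^sub>R norm x) -` B \<inter> space (restrict_space lborel (ball 0 1 - {0}))
      \<in> sets (restrict_space lborel (ball (0::real^'n) 1 - {0}))"
    using measurable_sets[OF normalize_measurable_restrict Bs] .
  have "(\<lambda>x. x /\<^sub>R norm x) -` B \<inter> (ball 0 1 - {0}) = cone_sector 1 (B::(real^'n) set)"
    by (auto simp: cone_sector_def)
  moreover have "cone_sector 1 B \<subseteq> ball 0 1 - {0}" by (auto simp: cone_sector_def)
  ultimately show ?thesis
    unfolding sphere_measure_def
    by (simp add: emeasure_scale_measure emeasure_distr[OF normalize_measurable_restrict Bs]
        emeasure_restrict_space space_restrict_space cone_sector_sets[OF Bs])
qed

lemma finite_measure_sphere_measure: "finite_measure (sphere_measure :: (real^'n) measure)"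
proof (rule finite_measureI)
  have "usphere \<in> sets (sphere_measure :: (real^'n) measure)"
    using sets.top[of "sphere_measure :: (real^'n) measure"] by (simp add: space_sphere_measure)
  then have "emeasure (sphere_measure :: (real^'n) measure) usphere
      = ennreal (real CARD('n)) * emeasure lborel (cone_sector 1 (usphere::(real^'n) set))"
    by (rule emeasure_sphere_measure)
  also have "\<dots> < \<infinity>"
  proof -
    have "emeasure lborel (cone_sector 1 (usphere::(real^'n) set)) \<le> emeasure lborel (ball (0::real^'n) 1)"
      by (rule emeasure_mono) (auto simp: cone_sector_def)
    also have "\<dots> < \<infinity>" by (rule emeasure_bounded_finite) simp
    finally show ?thesis by (simp add: ennreal_mult_less_top)
  qed
  finally show "emeasure (sphere_measure :: (real^'n) measure) (space sphere_measure) \<noteq> \<infinity>"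
    by (simp add: space_sphere_measure)
qed

lemma sigma_finite_sphere_measure: "sigma_finite_measure (sphere_measure :: (real^'n) measure)"
  using finite_measure_sphere_measure by (rule finite_measure.axioms(1))

lemma borel_measurable_sphere_measure_continuous_on:
  assumes "continuous_on usphere (g :: real^'n \<Rightarrow> real)"
  shows "g \<in> borel_measurable sphere_measure"
proof -
  have "sets (sphere_measure::(real^'n) measure) = sets (restrict_space borel usphere)"
    unfolding sets_sphere_measure by (rule sets_restrict_space_cong) simp
  then show ?thesis
    using borel_measurable_continuous_on_restrict[OF assms] by (subst measurable_cong_sets) auto
qed

lemma integrable_sphere_measure_continuous_on:
  assumes "continuous_on usphere (g :: real^'n \<Rightarrow> real)"
  shows "integrable sphere_measure g"
proof -
  obtain B where B: "\<forall>\<theta>\<in>usphere. \<bar>g \<theta>\<bar> \<le> B"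
    using compact_imp_bounded[OF compact_continuous_image[OF assms compact_sphere]]
    by (auto simp: bounded_real)
  show ?thesis
  proof (rule finite_measure.integrable_const_bound[OF finite_measure_sphere_measure])
    show "AE x in sphere_measure. norm (g x) \<le> B" using B by (auto simp: space_sphere_measure)
  qed (rule borel_measurable_sphere_measure_continuous_on[OF assms])
qed

text \<open>Up to the factor \<open>N \<cdot> |cone_sector 1 B|\<close>, the law of \<open>|x|\<close> on \<open>cone_sector R B\<close>.\<close>
definition radial_measure :: "nat \<Rightarrow> real \<Rightarrow> real measure" where
  "radial_measure N R = density lborel (\<lambda>r. ennreal (indicator {0<..<R} r * r ^ (N - 1)))"

lemma sets_radial_measure [simp]: "sets (radial_measure N R) = sets borel"
  by (simp add: radial_measure_def)

lemma sigma_finite_radial_measure: "sigma_finite_measure (radial_measure N R)"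
  unfolding radial_measure_def
  by (subst sigma_finite_measure.sigma_finite_iff_density_finite'[OF sigma_finite_lborel]) auto

lemma nn_integral_radial_measure_power:
  fixes N m :: nat and R a g :: real
  assumes N: "N \<ge> 1" and a: "0 \<le> a" "a \<le> R" and g: "0 \<le> g"
  shows "(\<integral>\<^sup>+ r. ennreal (if r < a then r ^ m * g else 0) \<partial>radial_measure N R)
    = ennreal (a ^ (N + m) / (N + m) * g)"
proof -
  have "(\<integral>\<^sup>+ r. ennreal (if r < a then r ^ m * g else 0) \<partial>radial_measure N R)
      = (\<integral>\<^sup>+ r. ennreal (indicator {0<..<R} r * r ^ (N - 1)) * ennreal (if r < a then r ^ m * g else 0) \<partial>lborel)"
    unfolding radial_measure_def
    by (subst nn_integral_density) (auto intro!: borel_measurable_continuous_onI continuous_intros)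
  also have "\<dots> = (\<integral>\<^sup>+ r. ennreal (r ^ (N + m - 1) * g) * indicator {0..a} r \<partial>lborel)"
  proof (rule nn_integral_cong_AE)
    have "AE r in lborel. r \<noteq> 0" "AE r in lborel. r \<noteq> a" by (rule AE_lborel_singleton)+
    then show "AE r in lborel. ennreal (indicator {0<..<R} r * r ^ (N - 1)) * ennreal (if r < a then r ^ m * g else 0)
        = ennreal (r ^ (N + m - 1) * g) * indicator {0..a} r"
    proof eventually_elim
      case (elim r)
      have "r ^ (N - 1) * (r ^ m * g) = r ^ (N + m - 1) * g"
        using N by (simp add: power_add[symmetric] mult.assoc)
      then show ?case using elim a g
        by (auto simp: indicator_def ennreal_mult'[symmetric] mult.assoc)
    qed
  qed
  also have "\<dots> = ennreal (a ^ (N + m) / (N + m) * g - 0 ^ (N + m) / (N + m) * g)"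
  proof (rule nn_integral_FTC_Icc)
    show "(\<lambda>r::real. r ^ (N + m - 1) * g) \<in> borel_measurable borel"
      by (intro borel_measurable_continuous_onI continuous_intros)
    fix r :: real assume "r \<in> {0..a}"
    then show "0 \<le> r ^ (N + m - 1) * g" using g by simp
    have "((\<lambda>r. r ^ (N + m) / (N + m) * g) has_real_derivative
        (real (N + m) * r ^ (N + m - 1)) / (N + m) * g) (at r)"
      by (auto intro!: derivative_eq_intros)
    then show "((\<lambda>r. r ^ (N + m) / (N + m) * g) has_real_derivative r ^ (N + m - 1) * g) (at r)"
      using N by simp
  qed (use a in auto)
  also have "(0::real) ^ (N + m) = 0" using N by (simp add: power_0_left)
  finally show ?thesis by simp
qed

lemma emeasure_radial_measure_Iio:
  assumes N: "N \<ge> 1" and R: "R \<ge> 0"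
  shows "emeasure (radial_measure N R) {..<x} = ennreal (max 0 (min R x) ^ N / N)"
proof -
  have "emeasure (radial_measure N R) {..<x} = (\<integral>\<^sup>+ r. indicator {..<x} r \<partial>radial_measure N R)"
    by simp
  also have "\<dots> = (\<integral>\<^sup>+ r. ennreal (if r < max 0 (min R x) then r ^ 0 * 1 else 0) \<partial>radial_measure N R)"
    unfolding radial_measure_def
    by (rule nn_integral_cong_AE, subst AE_density) (auto simp: indicator_def)
  also have "\<dots> = ennreal (max 0 (min R x) ^ N / N)"
    using nn_integral_radial_measure_power[OF N, of "max 0 (min R x)" R 1 0] R by simp
  finally show ?thesis .
qed

lemma measure_eqI_Iio:
  fixes M N :: "real measure"
  assumes sets: "sets M = sets borel" "sets N = sets borel"
  assumes fin: "\<And>x. emeasure M {..< x} < \<infinity>"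
  assumes "\<And>x. emeasure M {..< x} = emeasure N {..< x}"
  shows "M = N"
proof (rule measure_eqI_generator_eq_countable)
  let ?LT = "\<lambda>a::real. {..< a}" let ?E = "range ?LT"
  show "Int_stable ?E"
  proof (clarsimp simp: Int_stable_def)
    fix a b :: real
    have "{..<a} \<inter> {..<b} = {..<min a b}" by auto
    then show "{..<a} \<inter> {..<b} \<in> range lessThan" by (metis rangeI)
  qed
  show "?E \<subseteq> Pow UNIV" "sets M = sigma_sets UNIV ?E" "sets N = sigma_sets UNIV ?E"
    unfolding sets borel_Iio by auto
  show "?LT`Rats \<subseteq> ?E" "(\<Union>i\<in>Rats. ?LT i) = UNIV" "\<And>a. a \<in> ?LT`Rats \<Longrightarrow> emeasure M a \<noteq> \<infinity>"
    using fin by (auto simp: less_top) (meson Rats_dense_in_real less_add_one)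
qed (auto intro: assms countable_rat)

lemma distr_norm_cone_sector:
  assumes B: "B \<in> sets (restrict_space lborel (usphere::(real^'n) set))" and R: "R > 0"
  shows "distr (restrict_space lborel (cone_sector R B)) borel norm =
    scale_measure (ennreal (real CARD('n)) * emeasure lborel (cone_sector 1 B)) (radial_measure CARD('n) R)"
proof (rule measure_eqI_Iio)
  fix x :: real
  let ?s = "max 0 (min R x)"
  have nm: "norm \<in> restrict_space lborel (cone_sector R B) \<rightarrow>\<^sub>M (borel :: real measure)"
    by (intro measurable_restrict_space1) simp
  have "emeasure (distr (restrict_space lborel (cone_sector R B)) borel norm) {..<x}
      = emeasure (restrict_space lborel (cone_sector R B)) (norm -` {..<x} \<inter> cone_sector R B)"
    by (subst emeasure_distr[OF nm]) (auto simp: space_restrict_space)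
  also have "\<dots> = emeasure lborel (norm -` {..<x} \<inter> cone_sector R B)"
    using cone_sector_sets[OF B, of R] by (subst emeasure_restrict_space) auto
  also have "norm -` {..<x} \<inter> cone_sector R B = cone_sector ?s B"
    by (auto simp: cone_sector_def less_max_iff_disj)
  finally have distr_eq: "emeasure (distr (restrict_space lborel (cone_sector R B)) borel norm) {..<x}
      = emeasure lborel (cone_sector ?s B)" .
  have "emeasure lborel (cone_sector ?s B) \<le> emeasure lborel (ball (0::real^'n) R)"
    by (rule emeasure_mono) (auto simp: cone_sector_def less_max_iff_disj)
  also have "\<dots> < \<infinity>" by (rule emeasure_bounded_finite) simp
  finally show "emeasure (distr (restrict_space lborel (cone_sector R B)) borel norm) {..<x} < \<infinity>"
    unfolding distr_eq .
  have "ennreal (real CARD('n)) * ennreal (?s ^ CARD('n) / CARD('n)) = ennreal (?s ^ CARD('n))"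
    by (subst ennreal_mult[symmetric]) auto
  then show "emeasure (distr (restrict_space lborel (cone_sector R B)) borel norm) {..<x} =
      emeasure (scale_measure (ennreal (real CARD('n)) * emeasure lborel (cone_sector 1 B))
        (radial_measure CARD('n) R)) {..<x}"
    unfolding distr_eq emeasure_cone_sector[OF B max.cobounded1]
    using R by (simp add: emeasure_radial_measure_Iio) (metis mult.assoc mult.commute)
qed simp_all

lemma polar_map_measurable:
  "(\<lambda>x::real^'n. (norm x, x /\<^sub>R norm x))
    \<in> restrict_space lborel (ball 0 R - {0}) \<rightarrow>\<^sub>M (radial_measure N R \<Otimes>\<^sub>M sphere_measure)"
proof (rule measurable_Pair)
  show "(\<lambda>x::real^'n. norm x) \<in> restrict_space lborel (ball 0 R - {0}) \<rightarrow>\<^sub>M radial_measure N R"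
    by (simp add: measurable_restrict_space1 cong: measurable_cong_sets)
  show "(\<lambda>x::real^'n. x /\<^sub>R norm x) \<in> restrict_space lborel (ball 0 R - {0}) \<rightarrow>\<^sub>M sphere_measure"
    by (subst measurable_cong_sets[OF refl sets_sphere_measure]) (rule normalize_measurable_restrict)
qed

lemma radial_sphere_pair_measure:
  assumes R: "R > 0"
  shows "radial_measure CARD('n) R \<Otimes>\<^sub>M (sphere_measure :: (real^'n) measure)
    = distr (restrict_space lborel (ball 0 R - {0})) (radial_measure CARD('n) R \<Otimes>\<^sub>M sphere_measure)
        (\<lambda>x::real^'n. (norm x, x /\<^sub>R norm x))"
  (is "_ = ?P")
proof (rule pair_measure_eqI[OF sigma_finite_radial_measure sigma_finite_sphere_measure])
  fix A B assume A: "A \<in> sets (radial_measure CARD('n) R)" and B: "B \<in> sets (sphere_measure :: (real^'n) measure)"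
  have B': "B \<in> sets (restrict_space lborel (usphere::(real^'n) set))" using B sets_sphere_measure by blast
  have Ab: "A \<in> sets (borel :: real measure)" using A by simp
  have nm: "norm \<in> restrict_space lborel (cone_sector R B) \<rightarrow>\<^sub>M (borel :: real measure)"
    by (intro measurable_restrict_space1) simp
  have eq: "(\<lambda>x::real^'n. (norm x, x /\<^sub>R norm x)) -` (A \<times> B) \<inter> space (restrict_space lborel (ball 0 R - {0}))
      = norm -` A \<inter> cone_sector R B"
    by (auto simp: cone_sector_def space_restrict_space)
  have sets: "norm -` A \<inter> cone_sector R B \<in> sets lborel"
    using cone_sector_sets[OF B', of R] measurable_sets[OF borel_measurable_norm Ab] by auto
  have "emeasure ?P (A \<times> B) = emeasure (restrict_space lborel (ball 0 R - {0}))
      ((\<lambda>x::real^'n. (norm x, x /\<^sub>R norm x)) -` (A \<times> B) \<inter> space (restrict_space lborel (ball 0 R - {0})))"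
    using A B by (subst emeasure_distr[OF polar_map_measurable]) auto
  also have "\<dots> = emeasure (restrict_space lborel (ball 0 R - {0})) (norm -` A \<inter> cone_sector R B)"
    unfolding eq ..
  also have "\<dots> = emeasure lborel (norm -` A \<inter> cone_sector R B)"
    using sets by (subst emeasure_restrict_space) (auto simp: cone_sector_def)
  also have "\<dots> = emeasure (distr (restrict_space lborel (cone_sector R B)) borel norm) A"
    using cone_sector_sets[OF B', of R] Ab
    by (subst emeasure_distr[OF nm Ab]) (auto simp: space_restrict_space emeasure_restrict_space)
  also have "\<dots> = emeasure (radial_measure CARD('n) R) A * emeasure sphere_measure B"
    unfolding distr_norm_cone_sector[OF B' R] emeasure_sphere_measure[OF B] by (simp add: ac_simps)
  finally show "emeasure (radial_measure CARD('n) R) A * emeasure sphere_measure B = emeasure ?P (A \<times> B)"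
    by simp
qed simp

lemma nn_integral_polar:
  assumes R: "R > 0"
    and f: "f \<in> borel_measurable (radial_measure CARD('n) R \<Otimes>\<^sub>M (sphere_measure :: (real^'n) measure))"
  shows "(\<integral>\<^sup>+ x. f (norm x, x /\<^sub>R norm x) \<partial>restrict_space lborel (ball (0::real^'n) R - {0}))
    = (\<integral>\<^sup>+ \<theta>. (\<integral>\<^sup>+ r. f (r, \<theta>) \<partial>radial_measure CARD('n) R) \<partial>sphere_measure)"
proof -
  interpret pair_sigma_finite "radial_measure CARD('n) R" "sphere_measure :: (real^'n) measure"
    using sigma_finite_radial_measure sigma_finite_sphere_measure by (simp add: pair_sigma_finite_def)
  have eq: "distr (restrict_space lborel (ball 0 R - {0})) (radial_measure CARD('n) R \<Otimes>\<^sub>M sphere_measure)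
      (\<lambda>x::real^'n. (norm x, x /\<^sub>R norm x)) = radial_measure CARD('n) R \<Otimes>\<^sub>M sphere_measure"
    by (rule radial_sphere_pair_measure[OF R, symmetric])
  have "(\<integral>\<^sup>+ x. f (norm x, x /\<^sub>R norm x) \<partial>restrict_space lborel (ball (0::real^'n) R - {0}))
      = integral\<^sup>N (radial_measure CARD('n) R \<Otimes>\<^sub>M sphere_measure) f"
    using f by (subst nn_integral_distr[OF polar_map_measurable, symmetric]) (auto simp: eq)
  also have "\<dots> = (\<integral>\<^sup>+ \<theta>. (\<integral>\<^sup>+ r. f (r, \<theta>) \<partial>radial_measure CARD('n) R) \<partial>sphere_measure)"
    by (rule nn_integral_snd[symmetric, OF f])
  finally show ?thesis .
qed

section \<open>Star-shaped domains\<close>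

definition star_domain :: "((real^'n) \<Rightarrow> real) \<Rightarrow> (real^'n) set" where
  "star_domain \<rho> = {x. x \<noteq> 0 \<and> norm x < \<rho> (x /\<^sub>R norm x)}"

lemma open_star_domain:
  assumes "continuous_on usphere (\<rho> :: real^'n \<Rightarrow> real)"
  shows "open (star_domain \<rho>)"
proof -
  have "continuous_on (-{0}) (\<lambda>x::real^'n. \<rho> (x /\<^sub>R norm x))"
    by (rule continuous_on_compose2[OF assms]) (auto intro!: continuous_intros normalize_in_sphere)
  then have "continuous_on (-{0}) (\<lambda>x::real^'n. norm x - \<rho> (x /\<^sub>R norm x))"
    by (intro continuous_intros)
  then have "open ((-{0}) \<inter> (\<lambda>x::real^'n. norm x - \<rho> (x /\<^sub>R norm x)) -` {..<0})"
    by (rule continuous_open_preimage) auto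
  also have "(-{0}) \<inter> (\<lambda>x::real^'n. norm x - \<rho> (x /\<^sub>R norm x)) -` {..<0} = star_domain \<rho>"
    by (auto simp: star_domain_def)
  finally show ?thesis .
qed

lemma star_domain_sets:
  "continuous_on usphere (\<rho> :: real^'n \<Rightarrow> real) \<Longrightarrow> star_domain \<rho> \<in> sets lborel"
  by (simp add: borel_open open_star_domain)

lemma nn_integral_star_domain:
  fixes \<rho> G :: "real^'n \<Rightarrow> real" and m :: nat
  assumes \<rho>c: "continuous_on usphere \<rho>" and \<rho>pos: "\<forall>\<theta>\<in>usphere. 0 < \<rho> \<theta>"
    and Gc: "continuous_on usphere G" and Gpos: "\<forall>\<theta>\<in>usphere. 0 \<le> G \<theta>"
  shows "(\<integral>\<^sup>+ x. ennreal (indicator (star_domain \<rho>) x * (norm x ^ m * G (x /\<^sub>R norm x))) \<partial>lborel)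
    = (\<integral>\<^sup>+ \<theta>. ennreal (\<rho> \<theta> ^ (CARD('n) + m) / (CARD('n) + m) * G \<theta>) \<partial>sphere_measure)"
proof -
  obtain R where R: "R > 0" and \<rho>R: "\<forall>\<theta>\<in>usphere. \<rho> \<theta> < R"
  proof -
    obtain B where "\<forall>\<theta>\<in>usphere. \<bar>\<rho> \<theta>\<bar> \<le> B"
      using compact_imp_bounded[OF compact_continuous_image[OF \<rho>c compact_sphere]]
      by (auto simp: bounded_real)
    then show thesis by (intro that[of "\<bar>B\<bar> + 1"]) force+
  qed
  define f where "f z = ennreal (if fst z < \<rho> (snd z) then fst z ^ m * G (snd z) else 0)"
    for z :: "real \<times> (real^'n)"
  have [measurable]: "\<rho> \<in> borel_measurable sphere_measure" "G \<in> borel_measurable sphere_measure"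
    using borel_measurable_sphere_measure_continuous_on \<rho>c Gc by auto
  have [measurable]: "fst \<in> borel_measurable (radial_measure CARD('n) R \<Otimes>\<^sub>M (sphere_measure::(real^'n) measure))"
    by (rule measurable_compose[OF measurable_fst]) (simp add: radial_measure_def)
  have fm: "f \<in> borel_measurable (radial_measure CARD('n) R \<Otimes>\<^sub>M (sphere_measure::(real^'n) measure))"
    unfolding f_def by measurable
  have "(\<integral>\<^sup>+ x. ennreal (indicator (star_domain \<rho>) x * (norm x ^ m * G (x /\<^sub>R norm x))) \<partial>lborel)
     = (\<integral>\<^sup>+ x. f (norm x, x /\<^sub>R norm x) * indicator (ball 0 R - {0}) x \<partial>lborel)"
  proof (rule nn_integral_cong)
    fix x :: "real^'n"
    show "ennreal (indicator (star_domain \<rho>) x * (norm x ^ m * G (x /\<^sub>R norm x)))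
        = f (norm x, x /\<^sub>R norm x) * indicator (ball 0 R - {0}) x"
    proof (cases "x = 0")
      case False
      then have "\<rho> (x /\<^sub>R norm x) < R" using \<rho>R normalize_in_sphere by blast
      then show ?thesis using False by (auto simp: f_def indicator_def star_domain_def)
    qed (simp add: f_def star_domain_def)
  qed
  also have "\<dots> = (\<integral>\<^sup>+ x. f (norm x, x /\<^sub>R norm x) \<partial>restrict_space lborel (ball (0::real^'n) R - {0}))"
    by (subst nn_integral_restrict_space) auto
  also have "\<dots> = (\<integral>\<^sup>+ \<theta>. (\<integral>\<^sup>+ r. f (r, \<theta>) \<partial>radial_measure CARD('n) R) \<partial>sphere_measure)"
    by (rule nn_integral_polar[OF R fm])
  also have "\<dots> = (\<integral>\<^sup>+ \<theta>. ennreal (\<rho> \<theta> ^ (CARD('n) + m) / (CARD('n) + m) * G \<theta>) \<partial>sphere_measure)"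
  proof (rule nn_integral_cong)
    fix \<theta> :: "real^'n" assume "\<theta> \<in> space sphere_measure"
    then have "\<theta> \<in> usphere" by (simp add: space_sphere_measure)
    then show "(\<integral>\<^sup>+ r. f (r, \<theta>) \<partial>radial_measure CARD('n) R)
        = ennreal (\<rho> \<theta> ^ (CARD('n) + m) / (CARD('n) + m) * G \<theta>)"
      unfolding f_def fst_conv snd_conv using \<rho>pos \<rho>R Gpos
      by (intro nn_integral_radial_measure_power) (auto intro: less_imp_le)
  qed
  finally show ?thesis .
qed

lemma emeasure_star_domain:
  fixes \<rho> :: "real^'n \<Rightarrow> real"
  assumes \<rho>c: "continuous_on usphere \<rho>" and \<rho>pos: "\<forall>\<theta>\<in>usphere. 0 < \<rho> \<theta>"
  shows "emeasure lborel (star_domain \<rho>) = ennreal ((\<integral>\<theta>. \<rho> \<theta> ^ CARD('n) \<partial>sphere_measure) / CARD('n))"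
proof -
  have "emeasure lborel (star_domain \<rho>) = (\<integral>\<^sup>+ x. indicator (star_domain \<rho>) x \<partial>lborel)"
    using star_domain_sets[OF \<rho>c] by simp
  also have "\<dots> = (\<integral>\<^sup>+ x. ennreal (indicator (star_domain \<rho>) x * (norm x ^ 0 * 1)) \<partial>lborel)"
    by (intro nn_integral_cong) (simp add: indicator_def)
  also have "\<dots> = (\<integral>\<^sup>+ \<theta>. ennreal (\<rho> \<theta> ^ CARD('n) / CARD('n)) \<partial>sphere_measure)"
    using nn_integral_star_domain[OF \<rho>c \<rho>pos, of "\<lambda>_. 1" 0] by simp
  also have "\<dots> = ennreal (\<integral>\<theta>. \<rho> \<theta> ^ CARD('n) / CARD('n) \<partial>sphere_measure)"
    using \<rho>pos
    by (intro nn_integral_eq_integral integrable_sphere_measure_continuous_on continuous_intros \<rho>c)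
      (auto simp: space_sphere_measure less_imp_le)
  finally show ?thesis by simp
qed

text \<open>Splitting \<open>G\<close> into its positive and negative parts removes the sign condition.\<close>
lemma has_bochner_integral_star_domain:
  fixes \<rho> G :: "real^'n \<Rightarrow> real" and m :: nat
  assumes \<rho>c: "continuous_on usphere \<rho>" and \<rho>pos: "\<forall>\<theta>\<in>usphere. 0 < \<rho> \<theta>"
    and Gc: "continuous_on UNIV G"
  shows "has_bochner_integral lborel
      (\<lambda>x. indicator (star_domain \<rho>) x * (norm x ^ m * G (x /\<^sub>R norm x)))
      (\<integral>\<theta>. \<rho> \<theta> ^ (CARD('n) + m) / (CARD('n) + m) * G \<theta> \<partial>sphere_measure)"
proof -
  have "real CARD('n) + real m \<noteq> 0" by (simp add: add_nonneg_eq_0_iff)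
  note [simp] = this
  let ?F = "\<lambda>H x. indicator (star_domain \<rho>) x * (norm x ^ m * H (x /\<^sub>R norm x))"
  let ?I = "\<lambda>H. \<integral>\<theta>. \<rho> \<theta> ^ (CARD('n) + m) / (CARD('n) + m) * H \<theta> \<partial>sphere_measure"
  have int: "integrable sphere_measure (\<lambda>\<theta>. \<rho> \<theta> ^ (CARD('n) + m) / (CARD('n) + m) * H \<theta>)"
    if "continuous_on UNIV H" for H
    using that by (intro integrable_sphere_measure_continuous_on continuous_intros \<rho>c)
      (auto intro: continuous_on_subset)
  have nonneg: "has_bochner_integral lborel (?F H) (?I H)"
    if Hc: "continuous_on UNIV H" and H0: "\<And>\<theta>. 0 \<le> H \<theta>" for H
  proof (rule has_bochner_integral_nn_integral)
    have [measurable]: "H \<in> borel_measurable borel" by (rule borel_measurable_continuous_onI[OF Hc])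
    have [measurable]: "star_domain \<rho> \<in> sets lborel" by (rule star_domain_sets[OF \<rho>c])
    show "?F H \<in> borel_measurable lborel" by measurable
    show "AE x in lborel. 0 \<le> ?F H x"
      using H0 by (auto simp: indicator_def)
    have nn: "AE \<theta> in sphere_measure. 0 \<le> \<rho> \<theta> ^ (CARD('n) + m) / (CARD('n) + m) * H \<theta>"
      using \<rho>pos H0 by (auto simp: space_sphere_measure less_imp_le)
    then show "0 \<le> ?I H" by (rule integral_nonneg_AE)
    show "(\<integral>\<^sup>+ x. ennreal (?F H x) \<partial>lborel) = ennreal (?I H)"
      using nn_integral_star_domain[OF \<rho>c \<rho>pos continuous_on_subset[OF Hc subset_UNIV], of m] H0
        nn_integral_eq_integral[OF int[OF Hc] nn] by simp
  qed
  let ?Gp = "\<lambda>\<theta>. max 0 (G \<theta>)" and ?Gm = "\<lambda>\<theta>. max 0 (- G \<theta>)"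
  have c: "continuous_on UNIV ?Gp" "continuous_on UNIV ?Gm"
    by (intro continuous_intros Gc)+
  have "has_bochner_integral lborel (\<lambda>x. ?F ?Gp x - ?F ?Gm x) (?I ?Gp - ?I ?Gm)"
    using c by (intro has_bochner_integral_diff nonneg) auto
  moreover have "(\<lambda>x. ?F ?Gp x - ?F ?Gm x) = ?F G"
    by (auto simp: max_def algebra_simps)
  moreover have "?I ?Gp - ?I ?Gm = ?I G"
    unfolding Bochner_Integration.integral_diff[OF int[OF c(1)] int[OF c(2)], symmetric]
    by (rule Bochner_Integration.integral_cong) (auto simp: max_def right_diff_distrib[symmetric])
  ultimately show ?thesis by simp
qed

lemma measure_star_body:
  fixes \<rho> :: "real^'n \<Rightarrow> real"
  assumes \<rho>c: "continuous_on usphere \<rho>" and \<rho>pos: "\<forall>\<theta>\<in>usphere. 0 < \<rho> \<theta>"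
  shows "measure lebesgue (insert 0 (star_domain \<rho>)) = (\<integral>\<theta>. \<rho> \<theta> ^ CARD('n) \<partial>sphere_measure) / CARD('n)"
proof -
  have sets: "star_domain \<rho> \<in> sets lborel" by (rule star_domain_sets[OF \<rho>c])
  then have "emeasure lebesgue (insert 0 (star_domain \<rho>)) = emeasure lborel (star_domain \<rho> \<union> {0})"
    by simp
  also have "\<dots> = emeasure lborel (star_domain \<rho>)"
    using sets by (intro emeasure_Un_null_set) (auto simp: null_sets_def)
  finally have "emeasure lebesgue (insert 0 (star_domain \<rho>))
      = ennreal ((\<integral>\<theta>. \<rho> \<theta> ^ CARD('n) \<partial>sphere_measure) / CARD('n))"
    using emeasure_star_domain[OF \<rho>c \<rho>pos] by simp
  moreover have "0 \<le> (\<integral>\<theta>. \<rho> \<theta> ^ CARD('n) \<partial>sphere_measure) / CARD('n)"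
    using \<rho>pos by (intro divide_nonneg_nonneg integral_nonneg_AE)
      (auto simp: space_sphere_measure less_imp_le)
  ultimately show ?thesis by (simp add: measure_def)
qed

lemma first_moment_star_body:
  fixes \<rho> :: "real^'n \<Rightarrow> real"
  assumes \<rho>c: "continuous_on usphere \<rho>" and \<rho>pos: "\<forall>\<theta>\<in>usphere. 0 < \<rho> \<theta>"
  shows "(set_lebesgue_integral lebesgue (insert 0 (star_domain \<rho>)) (\<lambda>x. x)) $ i
      = (\<integral>\<theta>. \<rho> \<theta> ^ (CARD('n) + 1) / (CARD('n) + 1) * \<theta> $ i \<partial>sphere_measure)"
proof -
  let ?A = "insert 0 (star_domain \<rho>)"
  have As[measurable]: "?A \<in> sets lborel" using star_domain_sets[OF \<rho>c] by simp
  obtain B where B: "\<forall>\<theta>\<in>usphere. \<bar>\<rho> \<theta>\<bar> \<le> B"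
    using compact_imp_bounded[OF compact_continuous_image[OF \<rho>c compact_sphere]]
    by (auto simp: bounded_real)
  have sub: "?A \<subseteq> cball 0 \<bar>B\<bar>"
    using B normalize_in_sphere by (fastforce simp: star_domain_def)
  have fm: "(\<lambda>x. indicator ?A x *\<^sub>R x) \<in> borel_measurable lborel" by measurable
  have fi: "integrable lborel (\<lambda>x. indicator ?A x *\<^sub>R x)"
  proof (rule Bochner_Integration.integrable_bound)
    show "integrable lborel (\<lambda>x. indicator (cball (0::real^'n) \<bar>B\<bar>) x * \<bar>B\<bar>)"
      by (intro integrable_mult_left integrable_real_indicator emeasure_bounded_finite) auto
    show "AE x in lborel. norm (indicator ?A x *\<^sub>R x) \<le> norm (indicator (cball (0::real^'n) \<bar>B\<bar>) x * \<bar>B\<bar>)"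
      using sub by (intro AE_I2) (auto simp: indicator_def)
  qed (rule fm)
  have "set_lebesgue_integral lebesgue ?A (\<lambda>x. x) = (\<integral>x. indicator ?A x *\<^sub>R x \<partial>lborel)"
    unfolding set_lebesgue_integral_def by (rule integral_completion[OF fm])
  then have "(set_lebesgue_integral lebesgue ?A (\<lambda>x. x)) $ i = (\<integral>x. (indicator ?A x *\<^sub>R x) $ i \<partial>lborel)"
    using integral_bounded_linear[OF bounded_linear_vec_nth fi] by simp
  also have "\<dots> = (\<integral>x. indicator (star_domain \<rho>) x * (norm x ^ 1 * (x /\<^sub>R norm x) $ i) \<partial>lborel)"
    by (rule Bochner_Integration.integral_cong) (auto simp: indicator_def star_domain_def)
  also have "\<dots> = (\<integral>\<theta>. \<rho> \<theta> ^ (CARD('n) + 1) / (CARD('n) + 1) * \<theta> $ i \<partial>sphere_measure)"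
    using has_bochner_integral_star_domain[OF \<rho>c \<rho>pos, of "\<lambda>\<theta>. \<theta> $ i" 1]
    by (simp add: has_bochner_integral_iff continuous_on_component)
  finally show ?thesis .
qed

lemma integral_component_punctured_ball:
  "(\<integral>x. indicator (ball (0::real^'n) r - {0}) x * x $ i \<partial>lborel) = 0"
proof -
  let ?f = "\<lambda>x::real^'n. indicator (ball (0::real^'n) r - {0}) x * x $ i"
  have [measurable]: "ball (0::real^'n) r - {0} \<in> sets borel" by (intro borel_open) auto
  have uminus: "distr lborel borel uminus = (lborel :: (real^'n) measure)"
    by (subst lborel_affine[of "-1" 0]) (auto simp: density_1 one_ennreal_def[symmetric])
  have "(\<integral>x. ?f x \<partial>lborel) = (\<integral>x. ?f (- x) \<partial>lborel)"
    by (subst (1) uminus[symmetric], rule integral_distr) auto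
  also have "\<dots> = - (\<integral>x. ?f x \<partial>lborel)"
    by (subst integral_minus[symmetric], rule Bochner_Integration.integral_cong) (auto simp: indicator_def)
  finally show ?thesis by simp
qed

lemma ns_set_eq_star_body:
  assumes "\<forall>\<theta>\<in>usphere. 0 < r0 + \<phi> \<theta>"
  shows "ns_set r0 \<phi> = insert 0 (star_domain (\<lambda>\<theta>::real^'n. r0 + \<phi> \<theta>))"
proof (intro set_eqI iffI)
  fix x assume "x \<in> ns_set r0 \<phi>"
  then obtain t \<theta> where x: "x = t *\<^sub>R \<theta>" "\<theta> \<in> usphere" "0 \<le> t" "t < r0 + \<phi> \<theta>"
    unfolding ns_set_def by blast
  then show "x \<in> insert 0 (star_domain (\<lambda>\<theta>. r0 + \<phi> \<theta>))"
    by (cases "t = 0") (auto simp: star_domain_def)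
next
  fix x assume x: "x \<in> insert 0 (star_domain (\<lambda>\<theta>. r0 + \<phi> \<theta>))"
  show "x \<in> ns_set r0 \<phi>"
  proof (cases "x = 0")
    case True
    have "axis undefined 1 \<in> (usphere :: (real^'n) set)" by simp
    with assms show ?thesis unfolding ns_set_def True
      by (intro CollectI exI[of _ 0] exI[of _ "axis undefined 1"]) auto
  next
    case False
    then have "x = norm x *\<^sub>R (x /\<^sub>R norm x)" "x /\<^sub>R norm x \<in> usphere" "norm x < r0 + \<phi> (x /\<^sub>R norm x)"
      using x normalize_in_sphere by (auto simp: star_domain_def)
    then show ?thesis unfolding ns_set_def
      by (intro CollectI exI[of _ "norm x"] exI[of _ "x /\<^sub>R norm x"]) auto
  qed
qed

section \<open>Expansion in an orthonormal basis\<close>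

lemma L2_sphere_continuous_on:
  "continuous_on usphere (f :: real^'n \<Rightarrow> real) \<Longrightarrow> L2_sphere f"
  unfolding L2_sphere_def
  by (auto intro!: borel_measurable_sphere_measure_continuous_on integrable_sphere_measure_continuous_on
      continuous_intros)

lemma L2_inner_scaled:
  assumes "\<forall>x\<in>usphere. g x = c * h x"
  shows "L2_inner f g = c * (\<integral>\<theta>. f \<theta> * h \<theta> \<partial>(sphere_measure :: (real^'n) measure))"
  unfolding L2_inner_def using assms
  by (subst integral_mult_right_zero[symmetric], intro Bochner_Integration.integral_cong)
    (auto simp: space_sphere_measure)

lemma L2_sphere_integrable_mult:
  assumes f: "L2_sphere (f :: real^'n \<Rightarrow> real)" and g: "L2_sphere g"
  shows "integrable sphere_measure (\<lambda>x. f x * g x)"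
proof (rule Bochner_Integration.integrable_bound)
  show "integrable sphere_measure (\<lambda>x. (f x)\<^sup>2 + (g x)\<^sup>2)"
    using f g unfolding L2_sphere_def by auto
  show "(\<lambda>x. f x * g x) \<in> borel_measurable sphere_measure"
    using f g unfolding L2_sphere_def by auto
  have "norm (f x * g x) \<le> norm ((f x)\<^sup>2 + (g x)\<^sup>2)" for x
  proof -
    have "2 * \<bar>f x * g x\<bar> \<le> (f x)\<^sup>2 + (g x)\<^sup>2"
      using sum_squares_bound[of "\<bar>f x\<bar>" "\<bar>g x\<bar>"] by (simp add: abs_mult power2_eq_square)
    then show ?thesis by simp
  qed
  then show "AE x in sphere_measure. norm (f x * g x) \<le> norm ((f x)\<^sup>2 + (g x)\<^sup>2)" by simp
qed

lemma parseval_L2_sphere: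
  fixes S :: "nat \<Rightarrow> (real^'n) \<Rightarrow> real"
  assumes S_L2: "\<And>k. L2_sphere (S k)"
    and S_orth: "\<And>j k. L2_inner (S j) (S k) = (if j = k then 1 else 0)"
    and S_complete: "\<And>f. L2_sphere f \<Longrightarrow>
          (\<lambda>n. L2_norm_sq (\<lambda>x. f x - (\<Sum>k<n. L2_inner f (S k) * S k x))) \<longlonglongrightarrow> 0"
    and f: "L2_sphere f"
  shows "(\<lambda>k. (L2_inner f (S k))\<^sup>2) sums L2_norm_sq f"
proof -
  define c where "c k = L2_inner f (S k)" for k
  have ifS: "integrable sphere_measure (\<lambda>x. f x * S k x)" for k
    by (rule L2_sphere_integrable_mult[OF f S_L2])
  have iSS: "integrable sphere_measure (\<lambda>x. S j x * S k x)" for j k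
    by (rule L2_sphere_integrable_mult[OF S_L2 S_L2])
  have iff: "integrable sphere_measure (\<lambda>x. (f x)\<^sup>2)" using f by (simp add: L2_sphere_def)
  have bessel: "L2_norm_sq (\<lambda>x. f x - (\<Sum>k<n. c k * S k x)) = L2_norm_sq f - (\<Sum>k<n. (c k)\<^sup>2)" for n
  proof -
    have "(f x - (\<Sum>k<n. c k * S k x))\<^sup>2 = (f x)\<^sup>2 - 2 * (\<Sum>k<n. c k * (f x * S k x))
        + (\<Sum>j<n. \<Sum>k<n. c j * c k * (S j x * S k x))" for x
      by (simp add: power2_eq_square sum_distrib_left sum_product algebra_simps)
    then have "L2_norm_sq (\<lambda>x. f x - (\<Sum>k<n. c k * S k x))
        = L2_norm_sq f - 2 * (\<Sum>k<n. c k * L2_inner f (S k))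
          + (\<Sum>j<n. \<Sum>k<n. c j * c k * L2_inner (S j) (S k))"
      unfolding L2_norm_sq_def L2_inner_def using iff ifS iSS
      by (simp add: Bochner_Integration.integral_sum Bochner_Integration.integral_diff
          Bochner_Integration.integral_add)
    also have "\<dots> = L2_norm_sq f - (\<Sum>k<n. (c k)\<^sup>2)"
      by (simp add: S_orth c_def power2_eq_square if_distrib sum.If_cases)
    finally show ?thesis .
  qed
  have "(\<lambda>n. L2_norm_sq f - (\<Sum>k<n. (c k)\<^sup>2)) \<longlonglongrightarrow> 0"
    using S_complete[OF f] bessel by (simp add: c_def)
  then have "(\<lambda>n. L2_norm_sq f - (L2_norm_sq f - (\<Sum>k<n. (c k)\<^sup>2))) \<longlonglongrightarrow> L2_norm_sq f - 0"
    by (intro tendsto_intros)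
  then show ?thesis unfolding sums_def c_def by simp
qed

lemma infsum_high_modes:
  fixes S :: "nat \<Rightarrow> (real^'n) \<Rightarrow> real" and n :: nat and \<kappa> :: real
  assumes S_L2: "\<And>k. L2_sphere (S k)"
    and S_orth: "\<And>j k. L2_inner (S j) (S k) = (if j = k then 1 else 0)"
    and S_complete: "\<And>f. L2_sphere f \<Longrightarrow>
          (\<lambda>n. L2_norm_sq (\<lambda>x. f x - (\<Sum>k<n. L2_inner f (S k) * S k x))) \<longlonglongrightarrow> 0"
    and f: "L2_sphere f" and mean: "L2_inner f (S 0) = 0"
    and low: "(\<Sum>k\<in>{1..n}. (L2_inner f (S k))\<^sup>2) \<le> \<kappa> * L2_norm_sq f" and \<kappa>: "0 \<le> \<kappa>"
  shows "\<exists>e. \<bar>e\<bar> \<le> \<kappa> \<and> infsum (\<lambda>k. (L2_inner f (S k))\<^sup>2) {n + 1..} = L2_norm_sq f * (1 + e)"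
proof -
  define c where "c = (\<lambda>k. (L2_inner f (S k))\<^sup>2)"
  define T where "T = (\<Sum>k\<in>{1..n}. c k)"
  have T0: "0 \<le> T" unfolding T_def c_def by (rule sum_nonneg) simp
  have hs: "(c has_sum L2_norm_sq f) UNIV"
    using sums_nonneg_imp_has_sum[OF parseval_L2_sphere[OF S_L2 S_orth S_complete f]]
    by (simp add: c_def)
  have "{..n} \<union> {n + 1..} = UNIV" by auto
  then have "L2_norm_sq f = infsum c ({..n} \<union> {n + 1..})"
    using hs by (simp add: has_sum_iff)
  also have "\<dots> = infsum c {..n} + infsum c {n + 1..}"
    using hs by (intro infsum_Un_disjoint) (auto intro: summable_on_subset_banach simp: has_sum_iff)
  also have "infsum c {..n} = T"
    using mean by (simp add: T_def c_def atMost_atLeast0 sum.atLeast_Suc_atMost)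
  finally have tail: "infsum c {n + 1..} = L2_norm_sq f - T" by simp
  show ?thesis
  proof (cases "L2_norm_sq f = 0")
    case True
    then show ?thesis using tail T0 low \<kappa> by (intro exI[of _ 0]) (simp add: T_def c_def)
  next
    case False
    have "0 \<le> L2_norm_sq f" unfolding L2_norm_sq_def by (rule integral_nonneg_AE) auto
    with False have pos: "0 < L2_norm_sq f" by simp
    show ?thesis
    proof (intro exI[of _ "- T / L2_norm_sq f"] conjI)
      show "\<bar>- T / L2_norm_sq f\<bar> \<le> \<kappa>"
        using T0 pos low by (simp add: T_def c_def divide_le_eq)
      have "L2_norm_sq f * (1 + - T / L2_norm_sq f) = L2_norm_sq f - T"
        using pos by (simp add: field_simps)
      then show "infsum (\<lambda>k. (L2_inner f (S k))\<^sup>2) {n + 1..} = L2_norm_sq f * (1 + - T / L2_norm_sq f)"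
        using tail by (simp add: c_def)
    qed
  qed
qed

section \<open>The function \<open>\<psi>\<close> and its coefficients\<close>

lemma power_taylor_remainder_bound:
  fixes r0 :: real and n :: nat
  assumes r0: "0 \<le> r0"
  shows "\<exists>C. \<forall>u. \<bar>u\<bar> \<le> r0 \<longrightarrow> \<bar>(r0 + u) ^ n - r0 ^ n - real n * r0 ^ (n - 1) * u\<bar> \<le> C * u\<^sup>2"
proof (induction n)
  case 0
  show ?case by (rule exI[of _ 0]) simp
next
  case (Suc n)
  then obtain C where C: "\<And>u. \<bar>u\<bar> \<le> r0 \<Longrightarrow> \<bar>(r0 + u) ^ n - r0 ^ n - real n * r0 ^ (n - 1) * u\<bar> \<le> C * u\<^sup>2"
    by blast
  show ?case
  proof (rule exI[of _ "2 * r0 * C + real n * r0 ^ (n - 1)"], intro allI impI)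
    fix u :: real assume u: "\<bar>u\<bar> \<le> r0"
    define E where "E = (r0 + u) ^ n - r0 ^ n - real n * r0 ^ (n - 1) * u"
    have "(r0 + u) ^ Suc n - r0 ^ Suc n - real (Suc n) * r0 ^ (Suc n - 1) * u
        = (r0 + u) * E + real n * r0 ^ (n - 1) * u\<^sup>2"
      by (cases n) (simp_all add: E_def algebra_simps power2_eq_square)
    moreover have "\<bar>(r0 + u) * E\<bar> \<le> (2 * r0) * (C * u\<^sup>2)"
      unfolding abs_mult by (rule mult_mono) (use u C[OF u] in \<open>auto simp: E_def\<close>)
    moreover have "0 \<le> real n * r0 ^ (n - 1) * u\<^sup>2" using r0 by simp
    ultimately show "\<bar>(r0 + u) ^ Suc n - r0 ^ Suc n - real (Suc n) * r0 ^ (Suc n - 1) * u\<bar>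
        \<le> (2 * r0 * C + real n * r0 ^ (n - 1)) * u\<^sup>2"
      by (simp add: algebra_simps)
  qed
qed

lemma normalized_power_increment_near_identity:
  fixes r0 :: real and n :: nat
  assumes r0: "0 < r0" and n: "1 \<le> n"
  obtains C where "\<And>u. \<bar>u\<bar> \<le> r0 \<Longrightarrow> \<bar>((r0 + u) ^ n - r0 ^ n) / (real n * r0 ^ (n - 1)) - u\<bar> \<le> C * u\<^sup>2"
proof -
  define D where "D = real n * r0 ^ (n - 1)"
  have D: "0 < D" using r0 n by (simp add: D_def)
  obtain C where C: "\<And>u. \<bar>u\<bar> \<le> r0 \<Longrightarrow> \<bar>(r0 + u) ^ n - r0 ^ n - D * u\<bar> \<le> C * u\<^sup>2"
    using power_taylor_remainder_bound[of r0 n] r0 by (auto simp: D_def)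
  have "\<bar>((r0 + u) ^ n - r0 ^ n) / D - u\<bar> \<le> C / D * u\<^sup>2" if "\<bar>u\<bar> \<le> r0" for u
  proof -
    have "\<bar>((r0 + u) ^ n - r0 ^ n) / D - u\<bar> = \<bar>(r0 + u) ^ n - r0 ^ n - D * u\<bar> / D"
      using D by (simp add: field_simps abs_divide)
    also have "\<dots> \<le> C * u\<^sup>2 / D" using C[OF that] D by (simp add: divide_right_mono)
    finally show ?thesis by simp
  qed
  then show thesis by (intro that[of "C / D"]) (simp add: D_def)
qed

lemma abs_le_normalized_power_increment:
  fixes r0 u :: real
  assumes r0: "0 < r0" and pos: "0 < r0 + u" and n: "1 \<le> n"
  shows "\<bar>u\<bar> \<le> real n * \<bar>((r0 + u) ^ n - r0 ^ n) / (real n * r0 ^ (n - 1))\<bar>"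
proof -
  define s where "s = (\<Sum>i<n. r0 ^ (n - Suc i) * (r0 + u) ^ i)"
  have "r0 ^ (n - Suc 0) * (r0 + u) ^ 0 \<le> s"
    unfolding s_def by (rule member_le_sum) (use r0 pos n in auto)
  then have s: "r0 ^ (n - 1) \<le> s" by simp
  moreover have "0 < r0 ^ (n - 1)" using r0 by simp
  ultimately have "0 < s" by linarith
  have "(r0 + u) ^ n - r0 ^ n = u * s"
    using power_diff_sumr2[of "r0 + u" n r0] by (simp add: s_def)
  then have "real n * \<bar>((r0 + u) ^ n - r0 ^ n) / (real n * r0 ^ (n - 1))\<bar> = \<bar>u\<bar> * (s / r0 ^ (n - 1))"
    using n r0 \<open>0 < s\<close> by (simp add: abs_mult abs_divide)
  also have "\<dots> \<ge> \<bar>u\<bar>"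
  proof -
    have "1 \<le> s / r0 ^ (n - 1)" using s r0 by (simp add: le_divide_eq)
    then show ?thesis using mult_left_mono[of 1 "s / r0 ^ (n - 1)" "\<bar>u\<bar>"] by simp
  qed
  finally show ?thesis .
qed

lemma C11_sphere_imp_continuous_on:
  assumes "C11_sphere \<phi>"
  shows "continuous_on usphere (\<phi> :: real^'n \<Rightarrow> real)"
proof -
  have "continuous_on usphere (hext \<phi>)"
    using assms unfolding C11_sphere_def
    by (intro continuous_at_imp_continuous_on ballI differentiable_imp_continuous_within) auto
  then show ?thesis by (rule continuous_on_cong[THEN iffD1, rotated 2]) (auto simp: hext_def)
qed

lemma abs_le_Linf_sphere:
  assumes "continuous_on usphere (\<phi> :: real^'n \<Rightarrow> real)" and "\<theta> \<in> usphere"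
  shows "\<bar>\<phi> \<theta>\<bar> \<le> Linf_sphere \<phi>"
proof -
  have "bounded ((\<lambda>x. \<bar>\<phi> x\<bar>) ` usphere)"
    by (intro compact_imp_bounded compact_continuous_image continuous_intros assms compact_sphere)
  then show ?thesis
    unfolding Linf_sphere_def by (intro cSUP_upper assms bounded_imp_bdd_above)
qed

lemma integral_sq_le_Linf_sphere:
  assumes \<phi>c: "continuous_on usphere (\<phi> :: real^'n \<Rightarrow> real)"
  shows "(\<integral>\<theta>. (\<phi> \<theta>)\<^sup>2 \<partial>sphere_measure)
    \<le> (Linf_sphere \<phi>)\<^sup>2 * measure (sphere_measure :: (real^'n) measure) usphere"
proof -
  have "(\<integral>\<theta>. (\<phi> \<theta>)\<^sup>2 \<partial>sphere_measure) \<le> (\<integral>\<theta>. (Linf_sphere \<phi>)\<^sup>2 \<partial>(sphere_measure::(real^'n) measure))"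
  proof (rule Bochner_Integration.integral_mono)
    fix \<theta> :: "real^'n" assume "\<theta> \<in> space sphere_measure"
    then have "\<bar>\<phi> \<theta>\<bar> \<le> Linf_sphere \<phi>"
      using abs_le_Linf_sphere[OF \<phi>c] by (simp add: space_sphere_measure)
    then show "(\<phi> \<theta>)\<^sup>2 \<le> (Linf_sphere \<phi>)\<^sup>2" by (metis abs_ge_zero power2_abs power_mono)
  qed (intro integrable_sphere_measure_continuous_on continuous_intros \<phi>c)+
  then show ?thesis by (simp add: space_sphere_measure mult.commute)
qed

lemma continuous_on_psi_fun:
  assumes "0 < r0" and "continuous_on usphere (\<phi> :: real^'n \<Rightarrow> real)"
  shows "continuous_on usphere (psi_fun r0 \<phi>)"
  unfolding psi_fun_def using assms by (intro continuous_intros) auto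

lemma integral_psi_fun_eq_zero:
  fixes \<phi> :: "real^'n \<Rightarrow> real"
  assumes r0: "0 < r0" and \<phi>c: "continuous_on usphere \<phi>" and pos: "\<forall>\<theta>\<in>usphere. 0 < r0 + \<phi> \<theta>"
    and vol: "measure lebesgue (ns_set r0 \<phi>) = measure lebesgue (ball (0::real^'n) r0)"
  shows "(\<integral>\<theta>. psi_fun r0 \<phi> \<theta> \<partial>sphere_measure) = 0"
proof -
  let ?N = "CARD('n)"
  have "ball (0::real^'n) r0 = insert 0 (star_domain (\<lambda>_. r0))"
    using r0 by (auto simp: star_domain_def)
  then have "(\<integral>\<theta>. (r0 + \<phi> \<theta>) ^ ?N \<partial>sphere_measure) = (\<integral>\<theta>. r0 ^ ?N \<partial>(sphere_measure :: (real^'n) measure))"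
    using vol ns_set_eq_star_body[OF pos] measure_star_body[of "\<lambda>\<theta>. r0 + \<phi> \<theta>"]
      measure_star_body[of "\<lambda>_::real^'n. r0"] \<phi>c pos r0
    by (simp add: continuous_on_add)
  then have "(\<integral>\<theta>. (r0 + \<phi> \<theta>) ^ ?N - r0 ^ ?N \<partial>sphere_measure) = 0"
    by (subst Bochner_Integration.integral_diff)
      (auto intro!: integrable_sphere_measure_continuous_on continuous_intros \<phi>c)
  then show ?thesis
    unfolding psi_fun_def by (simp add: integral_divide_zero)
qed

lemma integral_power_increment_mult_component_eq_zero:
  fixes \<phi> :: "real^'n \<Rightarrow> real"
  assumes r0: "0 < r0" and \<phi>c: "continuous_on usphere \<phi>" and pos: "\<forall>\<theta>\<in>usphere. 0 < r0 + \<phi> \<theta>"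
    and bar: "set_lebesgue_integral lebesgue (ns_set r0 \<phi>) (\<lambda>x. x) = 0"
  shows "(\<integral>\<theta>. ((r0 + \<phi> \<theta>) ^ (CARD('n) + 1) - r0 ^ (CARD('n) + 1)) * \<theta> $ i \<partial>sphere_measure) = 0"
proof -
  let ?N = "CARD('n)"
  let ?m = "\<lambda>\<rho>. \<integral>\<theta>. \<rho> \<theta> ^ (?N + 1) / (?N + 1) * \<theta> $ i \<partial>(sphere_measure :: (real^'n) measure)"
  have \<rho>c: "continuous_on usphere (\<lambda>\<theta>. r0 + \<phi> \<theta>)" by (intro continuous_intros \<phi>c)
  have m\<rho>: "?m (\<lambda>\<theta>. r0 + \<phi> \<theta>) = 0"
    using first_moment_star_body[OF \<rho>c pos, of i] bar ns_set_eq_star_body[OF pos] by simp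
  have "has_bochner_integral lborel
      (\<lambda>x. indicator (star_domain (\<lambda>_. r0)) x * (norm x ^ 1 * (x /\<^sub>R norm x) $ i)) (?m (\<lambda>_. r0))"
    using r0 by (intro has_bochner_integral_star_domain) (auto simp: continuous_on_component)
  moreover have "(\<lambda>x. indicator (star_domain (\<lambda>_. r0)) x * (norm x ^ 1 * (x /\<^sub>R norm x) $ i))
      = (\<lambda>x. indicator (ball (0::real^'n) r0 - {0}) x * x $ i)"
    by (auto simp: indicator_def star_domain_def)
  ultimately have "has_bochner_integral lborel (\<lambda>x. indicator (ball (0::real^'n) r0 - {0}) x * x $ i) (?m (\<lambda>_. r0))"
    by simp
  then have m0: "?m (\<lambda>_. r0) = 0"
    using integral_component_punctured_ball[of r0 i] by (simp add: has_bochner_integral_iff)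
  have "(\<integral>\<theta>. ((r0 + \<phi> \<theta>) ^ (?N + 1) - r0 ^ (?N + 1)) * \<theta> $ i \<partial>sphere_measure)
      = (\<integral>\<theta>. (?N + 1) * ((r0 + \<phi> \<theta>) ^ (?N + 1) / (?N + 1) * \<theta> $ i
          - r0 ^ (?N + 1) / (?N + 1) * \<theta> $ i) \<partial>sphere_measure)"
    by (rule Bochner_Integration.integral_cong) (simp_all add: diff_divide_distrib[symmetric] left_diff_distrib add_pos_nonneg)
  also have "\<dots> = (?N + 1) * (\<integral>\<theta>. (r0 + \<phi> \<theta>) ^ (?N + 1) / (?N + 1) * \<theta> $ i
      - r0 ^ (?N + 1) / (?N + 1) * \<theta> $ i \<partial>sphere_measure)"
    by (rule integral_mult_right_zero)
  also have "\<dots> = (?N + 1) * (?m (\<lambda>\<theta>. r0 + \<phi> \<theta>) - ?m (\<lambda>_. r0))"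
    by (subst Bochner_Integration.integral_diff)
      (auto intro!: integrable_sphere_measure_continuous_on continuous_intros \<phi>c)
  finally show ?thesis using m\<rho> m0 by simp
qed

lemma normalized_power_increments_close:
  fixes r0 :: real and n :: nat
  assumes r0: "0 < r0" and n: "1 \<le> n"
  obtains C where "\<And>u. \<bar>u\<bar> \<le> r0 \<Longrightarrow>
    \<bar>((r0 + u) ^ n - r0 ^ n) / (real n * r0 ^ (n - 1))
      - ((r0 + u) ^ (n + 1) - r0 ^ (n + 1)) / (real (n + 1) * r0 ^ n)\<bar> \<le> C * u\<^sup>2"
proof -
  obtain C1 where C1: "\<And>u. \<bar>u\<bar> \<le> r0 \<Longrightarrow> \<bar>((r0 + u) ^ n - r0 ^ n) / (real n * r0 ^ (n - 1)) - u\<bar> \<le> C1 * u\<^sup>2"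
    using normalized_power_increment_near_identity[OF r0 n] by auto
  obtain C2 where C2: "\<And>u. \<bar>u\<bar> \<le> r0 \<Longrightarrow>
      \<bar>((r0 + u) ^ (n + 1) - r0 ^ (n + 1)) / (real (n + 1) * r0 ^ n) - u\<bar> \<le> C2 * u\<^sup>2"
    using normalized_power_increment_near_identity[OF r0, of "n + 1"] by auto
  show thesis
  proof (rule that[of "C1 + C2"])
    fix u :: real assume u: "\<bar>u\<bar> \<le> r0"
    show "\<bar>((r0 + u) ^ n - r0 ^ n) / (real n * r0 ^ (n - 1))
      - ((r0 + u) ^ (n + 1) - r0 ^ (n + 1)) / (real (n + 1) * r0 ^ n)\<bar> \<le> (C1 + C2) * u\<^sup>2"
      using C1[OF u] C2[OF u] by (simp add: distrib_right)
  qed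
qed

lemma psi_first_moment_bound:
  fixes r0 :: real
  assumes r0: "0 < r0"
  obtains K where "\<And>(\<phi> :: real^'n \<Rightarrow> real) i. continuous_on usphere \<phi> \<Longrightarrow>
      \<forall>\<theta>\<in>usphere. \<bar>\<phi> \<theta>\<bar> \<le> r0 / 2 \<Longrightarrow>
      set_lebesgue_integral lebesgue (ns_set r0 \<phi>) (\<lambda>x. x) = 0 \<Longrightarrow>
      \<bar>\<integral>\<theta>. psi_fun r0 \<phi> \<theta> * \<theta> $ i \<partial>sphere_measure\<bar> \<le> K * (\<integral>\<theta>. (\<phi> \<theta>)\<^sup>2 \<partial>sphere_measure)"
proof -
  let ?N = "CARD('n)"
  obtain C where C: "\<And>u. \<bar>u\<bar> \<le> r0 \<Longrightarrow>
      \<bar>((r0 + u) ^ ?N - r0 ^ ?N) / (real ?N * r0 ^ (?N - 1))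
        - ((r0 + u) ^ (?N + 1) - r0 ^ (?N + 1)) / (real (?N + 1) * r0 ^ ?N)\<bar> \<le> C * u\<^sup>2"
    using normalized_power_increments_close[OF r0, of ?N] by (auto simp: Suc_le_eq)
  show thesis
  proof (rule that[of C])
    fix \<phi> :: "real^'n \<Rightarrow> real" and i
    assume \<phi>c: "continuous_on usphere \<phi>" and bound: "\<forall>\<theta>\<in>usphere. \<bar>\<phi> \<theta>\<bar> \<le> r0 / 2"
      and bar: "set_lebesgue_integral lebesgue (ns_set r0 \<phi>) (\<lambda>x. x) = 0"
    have pos: "\<forall>\<theta>\<in>usphere. 0 < r0 + \<phi> \<theta>" using bound r0 by force
    define D where "D = real (?N + 1) * r0 ^ ?N"
    define Q where "Q \<theta> = ((r0 + \<phi> \<theta>) ^ (?N + 1) - r0 ^ (?N + 1)) / D" for \<theta>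
    have int: "integrable sphere_measure (\<lambda>\<theta>. psi_fun r0 \<phi> \<theta> * \<theta> $ i - Q \<theta> * \<theta> $ i)"
      unfolding Q_def using r0
      by (intro integrable_sphere_measure_continuous_on continuous_intros continuous_on_psi_fun \<phi>c)
        (auto simp: D_def)
    have "(\<integral>\<theta>. Q \<theta> * \<theta> $ i \<partial>sphere_measure)
        = (\<integral>\<theta>. ((r0 + \<phi> \<theta>) ^ (?N + 1) - r0 ^ (?N + 1)) * \<theta> $ i \<partial>sphere_measure) / D"
      unfolding Q_def by (simp add: integral_divide_zero[symmetric] del: integral_divide_zero)
    then have Q0: "(\<integral>\<theta>. Q \<theta> * \<theta> $ i \<partial>sphere_measure) = 0"
      using integral_power_increment_mult_component_eq_zero[OF r0 \<phi>c pos bar] by simp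
    have close: "\<bar>psi_fun r0 \<phi> \<theta> * \<theta> $ i - Q \<theta> * \<theta> $ i\<bar> \<le> C * (\<phi> \<theta>)\<^sup>2"
      if \<theta>: "\<theta> \<in> usphere" for \<theta>
    proof -
      have "\<bar>\<phi> \<theta>\<bar> \<le> r0" using bound \<theta> r0 by force
      from C[OF this] have "\<bar>psi_fun r0 \<phi> \<theta> - Q \<theta>\<bar> \<le> C * (\<phi> \<theta>)\<^sup>2"
        unfolding psi_fun_def Q_def D_def .
      moreover have "\<bar>\<theta> $ i\<bar> \<le> 1" using component_le_norm_cart[of \<theta> i] \<theta> by simp
      ultimately have "\<bar>psi_fun r0 \<phi> \<theta> - Q \<theta>\<bar> * \<bar>\<theta> $ i\<bar> \<le> C * (\<phi> \<theta>)\<^sup>2"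
        by (metis abs_ge_zero mult_left_le order_trans)
      then show ?thesis by (simp add: left_diff_distrib[symmetric] abs_mult)
    qed
    have "\<bar>\<integral>\<theta>. psi_fun r0 \<phi> \<theta> * \<theta> $ i \<partial>sphere_measure\<bar>
        = \<bar>\<integral>\<theta>. psi_fun r0 \<phi> \<theta> * \<theta> $ i - Q \<theta> * \<theta> $ i \<partial>sphere_measure\<bar>"
      using int Q0 r0 unfolding Q_def
      by (subst Bochner_Integration.integral_diff)
        (auto intro!: integrable_sphere_measure_continuous_on continuous_intros continuous_on_psi_fun \<phi>c
          simp: D_def)
    also have "\<dots> \<le> (\<integral>\<theta>. C * (\<phi> \<theta>)\<^sup>2 \<partial>sphere_measure)"
      using int close
      by (intro integral_abs_bound_integral)
        (auto intro!: integrable_sphere_measure_continuous_on continuous_intros \<phi>c simp: space_sphere_measure)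
    finally show "\<bar>\<integral>\<theta>. psi_fun r0 \<phi> \<theta> * \<theta> $ i \<partial>sphere_measure\<bar> \<le> C * (\<integral>\<theta>. (\<phi> \<theta>)\<^sup>2 \<partial>sphere_measure)"
      by simp
  qed
qed

lemma integral_sq_le_L2_norm_sq_psi_fun:
  fixes \<phi> :: "real^'n \<Rightarrow> real"
  assumes r0: "0 < r0" and \<phi>c: "continuous_on usphere \<phi>" and pos: "\<forall>\<theta>\<in>usphere. 0 < r0 + \<phi> \<theta>"
  shows "(\<integral>\<theta>. (\<phi> \<theta>)\<^sup>2 \<partial>sphere_measure) \<le> (real CARD('n))\<^sup>2 * L2_norm_sq (psi_fun r0 \<phi>)"
proof -
  have "(\<integral>\<theta>. (\<phi> \<theta>)\<^sup>2 \<partial>sphere_measure) \<le> (\<integral>\<theta>. (real CARD('n))\<^sup>2 * (psi_fun r0 \<phi> \<theta>)\<^sup>2 \<partial>sphere_measure)"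
  proof (rule Bochner_Integration.integral_mono)
    fix \<theta> :: "real^'n" assume "\<theta> \<in> space sphere_measure"
    then have "\<bar>\<phi> \<theta>\<bar> \<le> real CARD('n) * \<bar>psi_fun r0 \<phi> \<theta>\<bar>"
      unfolding psi_fun_def using pos r0
      by (intro abs_le_normalized_power_increment) (auto simp: space_sphere_measure)
    then show "(\<phi> \<theta>)\<^sup>2 \<le> (real CARD('n))\<^sup>2 * (psi_fun r0 \<phi> \<theta>)\<^sup>2"
      by (metis abs_ge_zero power2_abs power_mono power_mult_distrib abs_mult abs_of_nat)
  qed (use r0 in \<open>intro integrable_sphere_measure_continuous_on continuous_intros continuous_on_psi_fun \<phi>c\<close>)+
  then show ?thesis by (simp add: L2_norm_sq_def)
qed

lemma psi_low_modes_bound: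
  fixes S :: "nat \<Rightarrow> (real^'n) \<Rightarrow> real" and b :: "nat \<Rightarrow> 'n" and r0 :: real
  assumes r0: "0 < r0"
    and S_coord: "\<And>k. 1 \<le> k \<Longrightarrow> k \<le> CARD('n) \<Longrightarrow> \<exists>a. \<forall>x\<in>usphere. S k x = a * x $ b k"
  obtains \<kappa> where "0 \<le> \<kappa>"
    and "\<And>\<phi>. continuous_on usphere \<phi> \<Longrightarrow> Linf_sphere \<phi> \<le> r0 / 2 \<Longrightarrow>
      set_lebesgue_integral lebesgue (ns_set r0 \<phi>) (\<lambda>x. x) = 0 \<Longrightarrow>
      (\<Sum>k\<in>{1..CARD('n)}. (L2_inner (psi_fun r0 \<phi>) (S k))\<^sup>2)
        \<le> \<kappa> * (Linf_sphere \<phi>)\<^sup>2 * L2_norm_sq (psi_fun r0 \<phi>)"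
proof -
  let ?N = "CARD('n)"
  obtain K where K: "\<And>(\<phi> :: real^'n \<Rightarrow> real) i. continuous_on usphere \<phi> \<Longrightarrow>
      \<forall>\<theta>\<in>usphere. \<bar>\<phi> \<theta>\<bar> \<le> r0 / 2 \<Longrightarrow>
      set_lebesgue_integral lebesgue (ns_set r0 \<phi>) (\<lambda>x. x) = 0 \<Longrightarrow>
      \<bar>\<integral>\<theta>. psi_fun r0 \<phi> \<theta> * \<theta> $ i \<partial>sphere_measure\<bar> \<le> K * (\<integral>\<theta>. (\<phi> \<theta>)\<^sup>2 \<partial>sphere_measure)"
    using psi_first_moment_bound[OF r0] by blast
  define a where "a k = (SOME a. \<forall>x\<in>usphere. S k x = a * x $ b k)" for k
  have a: "\<forall>x\<in>usphere. S k x = a k * x $ b k" if "k \<in> {1..?N}" for k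
    unfolding a_def by (rule someI_ex[OF S_coord]) (use that in auto)
  define M where "M = measure (sphere_measure :: (real^'n) measure) usphere"
  show thesis
  proof (rule that[of "(\<Sum>k\<in>{1..?N}. (a k)\<^sup>2) * K\<^sup>2 * M * (real ?N)\<^sup>2"])
    show "0 \<le> (\<Sum>k\<in>{1..?N}. (a k)\<^sup>2) * K\<^sup>2 * M * (real ?N)\<^sup>2"
      unfolding M_def by (intro mult_nonneg_nonneg sum_nonneg) auto
    fix \<phi> :: "real^'n \<Rightarrow> real"
    assume \<phi>c: "continuous_on usphere \<phi>" and Linf: "Linf_sphere \<phi> \<le> r0 / 2"
      and bar: "set_lebesgue_integral lebesgue (ns_set r0 \<phi>) (\<lambda>x. x) = 0"
    define I where "I = (\<integral>\<theta>. (\<phi> \<theta>)\<^sup>2 \<partial>sphere_measure)"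
    have bound: "\<forall>\<theta>\<in>usphere. \<bar>\<phi> \<theta>\<bar> \<le> r0 / 2"
      using abs_le_Linf_sphere[OF \<phi>c] Linf by force
    then have pos: "\<forall>\<theta>\<in>usphere. 0 < r0 + \<phi> \<theta>" using r0 by force
    have I0: "0 \<le> I" unfolding I_def by (rule integral_nonneg_AE) auto
    have I_Linf: "I \<le> (Linf_sphere \<phi>)\<^sup>2 * M"
      unfolding I_def M_def by (rule integral_sq_le_Linf_sphere[OF \<phi>c])
    have I_psi: "I \<le> (real ?N)\<^sup>2 * L2_norm_sq (psi_fun r0 \<phi>)"
      unfolding I_def by (rule integral_sq_le_L2_norm_sq_psi_fun[OF r0 \<phi>c pos])
    have I_sq: "I * I \<le> ((Linf_sphere \<phi>)\<^sup>2 * M) * ((real ?N)\<^sup>2 * L2_norm_sq (psi_fun r0 \<phi>))"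
      using I_Linf I_psi order_trans[OF I0 I_Linf] I0 by (rule mult_mono)
    have "(L2_inner (psi_fun r0 \<phi>) (S k))\<^sup>2 \<le> (a k)\<^sup>2 * (K\<^sup>2 * (I * I))" if k: "k \<in> {1..?N}" for k
    proof -
      define D where "D = (\<integral>\<theta>. psi_fun r0 \<phi> \<theta> * \<theta> $ b k \<partial>sphere_measure)"
      have "L2_inner (psi_fun r0 \<phi>) (S k) = a k * D"
        unfolding D_def by (rule L2_inner_scaled[OF a[OF k]])
      moreover have "D\<^sup>2 \<le> (K * I)\<^sup>2"
        using power_mono[OF K[OF \<phi>c bound bar, of "b k"] abs_ge_zero, of 2]
        by (simp add: D_def I_def)
      ultimately show ?thesis
        by (simp add: power_mult_distrib power2_eq_square[of I] mult_left_mono)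
    qed
    then have "(\<Sum>k\<in>{1..?N}. (L2_inner (psi_fun r0 \<phi>) (S k))\<^sup>2) \<le> (\<Sum>k\<in>{1..?N}. (a k)\<^sup>2 * (K\<^sup>2 * (I * I)))"
      by (rule sum_mono)
    also have "\<dots> \<le> (\<Sum>k\<in>{1..?N}. (a k)\<^sup>2) * (K\<^sup>2 * (((Linf_sphere \<phi>)\<^sup>2 * M) * ((real ?N)\<^sup>2 * L2_norm_sq (psi_fun r0 \<phi>))))"
      unfolding sum_distrib_right[symmetric] using I_sq by (intro mult_left_mono sum_nonneg) auto
    also have "\<dots> = (\<Sum>k\<in>{1..?N}. (a k)\<^sup>2) * K\<^sup>2 * M * (real ?N)\<^sup>2 * (Linf_sphere \<phi>)\<^sup>2 * L2_norm_sq (psi_fun r0 \<phi>)"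
      by (simp only: mult_ac)
    finally show "(\<Sum>k\<in>{1..?N}. (L2_inner (psi_fun r0 \<phi>) (S k))\<^sup>2)
        \<le> (\<Sum>k\<in>{1..?N}. (a k)\<^sup>2) * K\<^sup>2 * M * (real ?N)\<^sup>2 * (Linf_sphere \<phi>)\<^sup>2 * L2_norm_sq (psi_fun r0 \<phi>)" .
  qed
qed

lemma modulus_quadratic: "0 \<le> c \<Longrightarrow> modulus (\<lambda>t. c * t\<^sup>2)"
  unfolding modulus_def
  by (auto intro!: mono_onI mult_left_mono power_mono tendsto_eq_intros)

theorem mainTheorem15:
  fixes r0 :: real and S :: "nat \<Rightarrow> (real^'n) \<Rightarrow> real" and \<sigma> :: "nat \<Rightarrow> real"
    and b :: "nat \<Rightarrow> 'n"
  assumes dim: "CARD('n) \<ge> 2"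
    and r0: "r0 > 0" "measure lebesgue (ball (0::real^'n) r0) = 1"
    and S_L2: "\<And>k. L2_sphere (S k)"
    and S_orth: "\<And>j k. L2_inner (S j) (S k) = (if j = k then 1 else 0)"
    and S_complete: "\<And>f. L2_sphere f \<Longrightarrow>
          (\<lambda>n. L2_norm_sq (\<lambda>x. f x - (\<Sum>k<n. L2_inner f (S k) * S k x))) \<longlonglongrightarrow> 0"
    and S_eigen: "\<And>k. \<forall>x\<in>usphere. sph_laplacian (S k) x = - \<sigma> k * S k x"
    and \<sigma>_0: "\<sigma> 0 = 0"
    and \<sigma>_1N: "\<And>k. 1 \<le> k \<Longrightarrow> k \<le> CARD('n) \<Longrightarrow> \<sigma> k = real CARD('n) - 1"
    and \<sigma>_gap: "real CARD('n) - 1 < \<sigma> (CARD('n) + 1)"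
    and \<sigma>_mono: "mono \<sigma>"
    and S_0: "\<exists>c. \<forall>x\<in>usphere. S 0 x = c"
    and b_bij: "bij_betw b {1..CARD('n)} UNIV"
    and S_coord: "\<And>k. 1 \<le> k \<Longrightarrow> k \<le> CARD('n) \<Longrightarrow>
          \<exists>a>0. \<forall>x\<in>usphere. S k x = a * x $ b k"
  shows "\<exists>\<delta>>0. \<exists>\<eta>. modulus \<eta> \<and>
    (\<forall>\<phi>. C11_sphere \<phi> \<and> Linf_sphere \<phi> \<le> r0 / 2
        \<and> measure lebesgue (ns_set r0 \<phi>) = 1 \<and> barycenter (ns_set r0 \<phi>) = 0
        \<and> C11_norm \<phi> < \<delta> \<longrightarrow>
      L2_inner (psi_fun r0 \<phi>) (S 0) = 0 \<and>
      (\<exists>e. \<bar>e\<bar> \<le> \<eta> (Linf_sphere \<phi>) \<and>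
        infsum (\<lambda>k. (L2_inner (psi_fun r0 \<phi>) (S k))\<^sup>2) {CARD('n) + 1..}
          = L2_norm_sq (psi_fun r0 \<phi>) * (1 + e)))"
proof -
  obtain \<kappa> where \<kappa>0: "0 \<le> \<kappa>" and \<kappa>: "\<And>\<phi>. continuous_on usphere \<phi> \<Longrightarrow> Linf_sphere \<phi> \<le> r0 / 2 \<Longrightarrow>
      set_lebesgue_integral lebesgue (ns_set r0 \<phi>) (\<lambda>x. x) = 0 \<Longrightarrow>
      (\<Sum>k\<in>{1..CARD('n)}. (L2_inner (psi_fun r0 \<phi>) (S k))\<^sup>2)
        \<le> \<kappa> * (Linf_sphere \<phi>)\<^sup>2 * L2_norm_sq (psi_fun r0 \<phi>)"
    using psi_low_modes_bound[OF r0(1), of S b] S_coord by blast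
  obtain c where c: "\<forall>x\<in>usphere. S 0 x = c" using S_0 by blast
  have "L2_inner (psi_fun r0 \<phi>) (S 0) = 0 \<and> (\<exists>e. \<bar>e\<bar> \<le> \<kappa> * (Linf_sphere \<phi>)\<^sup>2 \<and>
      infsum (\<lambda>k. (L2_inner (psi_fun r0 \<phi>) (S k))\<^sup>2) {CARD('n) + 1..} = L2_norm_sq (psi_fun r0 \<phi>) * (1 + e))"
    if C11: "C11_sphere \<phi>" and Linf: "Linf_sphere \<phi> \<le> r0 / 2"
      and vol: "measure lebesgue (ns_set r0 \<phi>) = 1" and bar: "barycenter (ns_set r0 \<phi>) = 0" for \<phi>
  proof -
    have \<phi>c: "continuous_on usphere \<phi>" by (rule C11_sphere_imp_continuous_on[OF C11])
    have pos: "\<forall>\<theta>\<in>usphere. 0 < r0 + \<phi> \<theta>" using abs_le_Linf_sphere[OF \<phi>c] Linf r0(1) by force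
    have "L2_inner (psi_fun r0 \<phi>) (S 0) = c * (\<integral>\<theta>. psi_fun r0 \<phi> \<theta> * 1 \<partial>sphere_measure)"
      using c by (intro L2_inner_scaled) simp
    then have mean: "L2_inner (psi_fun r0 \<phi>) (S 0) = 0"
      using integral_psi_fun_eq_zero[OF r0(1) \<phi>c pos] vol r0(2) by simp
    have "set_lebesgue_integral lebesgue (ns_set r0 \<phi>) (\<lambda>x. x) = 0"
      using bar vol by (simp add: barycenter_def)
    then show ?thesis
      using infsum_high_modes[OF S_L2 S_orth S_complete L2_sphere_continuous_on mean \<kappa>[OF \<phi>c Linf]]
        continuous_on_psi_fun[OF r0(1) \<phi>c] \<kappa>0 mean by simp
  qed
  then show ?thesis
    using modulus_quadratic[OF \<kappa>0] by (intro exI[of _ "1::real"] exI[of _ "\<lambda>t. \<kappa> * t\<^sup>2"]) auto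
qed

end
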